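(* Let $G$ be a finite group and $\mathcal{A}$ a finite subgroup of $\mathbb{C}^\times$. Let $\psi\colon G\times G\to\mathcal{A}$ be a normalised 2-cocycle, and let $\Gamma=(G,\mathcal{A},\psi)$ be the central extension with underlying set $\mathcal{A}\times G$ and multiplication $(a,g)(b,h)=(ab\,\psi(g,h),gh)$. Index rows and columns of $|G|\times|G|$ matrices by the elements of $G$ in a fixed ordering, and for $(a,g)\in\Gamma$ define \[R(a,g)=a\left[\psi(x,g)\delta^{xg}_{y}\right]_{x,y\in G},\qquad L(a,g)=a\left[\psi(g,g^{-1}x)\delta^{x}_{gy}\right]_{x,y\in G}.\] Then a complex matrix $M$ indexed by $G$ satisfies $R(a,g)ML(a,g)^\ast=M$ for all $(a,g)\in\Gamma$ if and only if there exists a map $\phi\colon G\to\mathbb{C}$ such that $M=[\psi(x,y)\phi(xy)]_{x,y\in G}$.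
   Context: A normalised 2-cocycle is a function $\psi\colon G\times G\to\mathcal{A}$ with $\psi(g,1)=\psi(1,g)=1$ and $\psi(g,h)\psi(gh,k)=\psi(g,hk)\psi(h,k)$ for all $g,h,k\in G$. $\delta^a_b$ is the Kronecker delta and $^\ast$ denotes conjugate transpose. *)

theory Defs
  imports Complex_Main "HOL-Algebra.Group"
begin

definition finite_subgroup_units :: "complex set \<Rightarrow> bool" where
  "finite_subgroup_units A \<longleftrightarrow> finite A \<and> 1 \<in> A \<and> 0 \<notin> A \<and>
     (\<forall>a\<in>A. \<forall>b\<in>A. a * b \<in> A) \<and> (\<forall>a\<in>A. inverse a \<in> A)"

definition normalised_2cocycle ::
  "('g, 'm) monoid_scheme \<Rightarrow> complex set \<Rightarrow> ('g \<Rightarrow> 'g \<Rightarrow> complex) \<Rightarrow> bool" where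
  "normalised_2cocycle G A psi \<longleftrightarrow>
     (\<forall>g\<in>carrier G. \<forall>h\<in>carrier G. psi g h \<in> A) \<and>
     (\<forall>g\<in>carrier G. psi g \<one>\<^bsub>G\<^esub> = 1 \<and> psi \<one>\<^bsub>G\<^esub> g = 1) \<and>
     (\<forall>g\<in>carrier G. \<forall>h\<in>carrier G. \<forall>k\<in>carrier G.
        psi g h * psi (g \<otimes>\<^bsub>G\<^esub> h) k = psi g (h \<otimes>\<^bsub>G\<^esub> k) * psi h k)"

definition gmat_mult ::
  "('g, 'm) monoid_scheme \<Rightarrow> ('g \<Rightarrow> 'g \<Rightarrow> complex) \<Rightarrow> ('g \<Rightarrow> 'g \<Rightarrow> complex) \<Rightarrow> ('g \<Rightarrow> 'g \<Rightarrow> complex)" where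
  "gmat_mult G P Q = (\<lambda>x y. \<Sum>u\<in>carrier G. P x u * Q u y)"

definition gmat_adj :: "('g \<Rightarrow> 'g \<Rightarrow> complex) \<Rightarrow> ('g \<Rightarrow> 'g \<Rightarrow> complex)" where
  "gmat_adj P = (\<lambda>x y. cnj (P y x))"

definition gmat_eq :: "('g, 'm) monoid_scheme \<Rightarrow> ('g \<Rightarrow> 'g \<Rightarrow> complex) \<Rightarrow> ('g \<Rightarrow> 'g \<Rightarrow> complex) \<Rightarrow> bool" where
  "gmat_eq G P Q \<longleftrightarrow> (\<forall>x\<in>carrier G. \<forall>y\<in>carrier G. P x y = Q x y)"

definition Rmat :: "('g, 'm) monoid_scheme \<Rightarrow> ('g \<Rightarrow> 'g \<Rightarrow> complex) \<Rightarrow> complex \<Rightarrow> 'g \<Rightarrow> ('g \<Rightarrow> 'g \<Rightarrow> complex)" where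
  "Rmat G psi a g = (\<lambda>x y. a * (psi x g * (if x \<otimes>\<^bsub>G\<^esub> g = y then 1 else 0)))"

definition Lmat :: "('g, 'm) monoid_scheme \<Rightarrow> ('g \<Rightarrow> 'g \<Rightarrow> complex) \<Rightarrow> complex \<Rightarrow> 'g \<Rightarrow> ('g \<Rightarrow> 'g \<Rightarrow> complex)" where
  "Lmat G psi a g = (\<lambda>x y. a * (psi g (inv\<^bsub>G\<^esub> g \<otimes>\<^bsub>G\<^esub> x) * (if x = g \<otimes>\<^bsub>G\<^esub> y then 1 else 0)))"

end

theory Submission
  imports Defs
begin

text \<open>
  Conjugation by the pair (R(a,g), L(a,g)) moves the entry of M at (xg, g\<inverse>y) to position
  (x, y) and multiplies it by a conj(a) psi(x,g) conj(psi(g, g\<inverse>y)). All values of psi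
  and all a lie in a finite subgroup of the unit circle, so a conj(a) = 1. Taking a = 1 and
  g = y, normalisation shows that an invariant M satisfies M(x,y) = psi(x,y) M(xy,1).
  Conversely, for M(x,y) = psi(x,y) phi(xy) the cocycle identity with the triple
  (x, g, g\<inverse>y) turns psi(x,g) psi(xg, g\<inverse>y) into psi(x,y) psi(g, g\<inverse>y), and the
  remaining factor psi(g, g\<inverse>y) cancels against its conjugate.
\<close>

lemma norm_eq_1_if_finite_mult_closed:
  fixes S :: "'a::real_normed_div_algebra set"
  assumes "finite S" and "0 \<notin> S" and mult_closed: "\<And>x y. x \<in> S \<Longrightarrow> y \<in> S \<Longrightarrow> x * y \<in> S"
    and "a \<in> S"
  shows "norm a = 1"
proof -
  have powers_in: "a ^ Suc n \<in> S" for n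
    by (induction n) (use \<open>a \<in> S\<close> mult_closed in auto)
  have "\<not> inj (\<lambda>n. a ^ Suc n)"
    using finite_subset[OF _ \<open>finite S\<close>, of "range (\<lambda>n. a ^ Suc n)"] powers_in
      finite_imageD infinite_UNIV_nat by blast
  then obtain m n where "m < n" and eq: "a ^ Suc m = a ^ Suc n"
    unfolding inj_def by (metis linorder_neqE_nat)
  have "Suc n = Suc m + (n - m)"
    using \<open>m < n\<close> by simp
  then have "a ^ Suc m * a ^ (n - m) = a ^ Suc m * 1"
    by (metis eq power_add mult_1_right)
  moreover have "a ^ Suc m \<noteq> 0"
    using powers_in \<open>0 \<notin> S\<close> by metis
  ultimately have "a ^ (n - m) = 1"
    by (meson mult_left_cancel)
  then show ?thesis
    using power_eq_1_iff \<open>m < n\<close> by fastforce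
qed

lemma mult_cnj_eq_1_if_finite_subgroup_units:
  assumes "finite_subgroup_units A" and "a \<in> A"
  shows "a * cnj a = 1"
proof -
  have "norm a = 1"
    using assms by (intro norm_eq_1_if_finite_mult_closed[of A]) (auto simp: finite_subgroup_units_def)
  then show ?thesis
    by (metis complex_norm_square of_real_1 power_one)
qed

lemma gmat_mult_Rmat:
  fixes G (structure)
  assumes "monoid G" and "finite (carrier G)" and "x \<in> carrier G" and "g \<in> carrier G"
  shows "gmat_mult G (Rmat G psi a g) M x y = a * psi x g * M (x \<otimes> g) y"
proof -
  have "gmat_mult G (Rmat G psi a g) M x y
      = (\<Sum>u\<in>carrier G. if x \<otimes> g = u then a * psi x g * M u y else 0)"
    unfolding gmat_mult_def Rmat_def by (rule sum.cong) auto
  then show ?thesis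
    using assms by (simp add: monoid.m_closed)
qed

lemma gmat_mult_adj_Lmat:
  fixes G (structure)
  assumes "group G" and "finite (carrier G)" and "g \<in> carrier G" and "y \<in> carrier G"
  shows "gmat_mult G N (gmat_adj (Lmat G psi a g)) x y
    = N x (inv g \<otimes> y) * cnj (a * psi g (inv g \<otimes> y))"
proof -
  interpret group G by fact
  have "gmat_mult G N (gmat_adj (Lmat G psi a g)) x y
      = (\<Sum>v\<in>carrier G. if inv g \<otimes> y = v then N x v * cnj (a * psi g (inv g \<otimes> y)) else 0)"
    unfolding gmat_mult_def gmat_adj_def Lmat_def
  proof (rule sum.cong)
    fix v assume "v \<in> carrier G"
    then have "y = g \<otimes> v \<longleftrightarrow> inv g \<otimes> y = v"
      using assms(3,4) by (metis inv_solve_left)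
    then show "N x v * cnj (a * (psi g (inv g \<otimes> y) * (if y = g \<otimes> v then 1 else 0)))
        = (if inv g \<otimes> y = v then N x v * cnj (a * psi g (inv g \<otimes> y)) else 0)"
      by auto
  qed simp
  then show ?thesis
    using assms by simp
qed

lemma gmat_conj_Rmat_Lmat:
  fixes G (structure)
  assumes "group G" and "finite (carrier G)"
    and "g \<in> carrier G" and "x \<in> carrier G" and "y \<in> carrier G"
  shows "gmat_mult G (gmat_mult G (Rmat G psi a g) M) (gmat_adj (Lmat G psi a g)) x y
    = a * cnj a * psi x g * cnj (psi g (inv g \<otimes> y)) * M (x \<otimes> g) (inv g \<otimes> y)"
  using assms
  by (simp add: gmat_mult_adj_Lmat gmat_mult_Rmat group.is_monoid group.inv_closed ac_simps)

lemma twisted_form_if_gmat_conj_invariant: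
  fixes G (structure)
  assumes "group G" and "finite (carrier G)"
    and normalised: "\<And>g. g \<in> carrier G \<Longrightarrow> psi g \<one> = 1"
    and invariant: "\<And>g. g \<in> carrier G \<Longrightarrow>
      gmat_eq G (gmat_mult G (gmat_mult G (Rmat G psi 1 g) M) (gmat_adj (Lmat G psi 1 g))) M"
  shows "gmat_eq G M (\<lambda>x y. psi x y * M (x \<otimes> y) \<one>)"
  unfolding gmat_eq_def
proof (intro ballI)
  fix x y assume "x \<in> carrier G" and "y \<in> carrier G"
  then have "gmat_mult G (gmat_mult G (Rmat G psi 1 y) M) (gmat_adj (Lmat G psi 1 y)) x y = M x y"
    using invariant unfolding gmat_eq_def by blast
  then show "M x y = psi x y * M (x \<otimes> y) \<one>"
    using gmat_conj_Rmat_Lmat[OF assms(1,2) \<open>y \<in> carrier G\<close> \<open>x \<in> carrier G\<close> \<open>y \<in> carrier G\<close>]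
      normalised \<open>y \<in> carrier G\<close> \<open>group G\<close> by (simp add: group.l_inv)
qed

lemma gmat_conj_invariant_if_twisted_form:
  fixes G (structure)
  assumes "group G" and "finite (carrier G)"
    and "finite_subgroup_units A" and "normalised_2cocycle G A psi"
    and "a \<in> A" and "g \<in> carrier G"
    and twisted: "gmat_eq G M (\<lambda>x y. psi x y * phi (x \<otimes> y))"
  shows "gmat_eq G (gmat_mult G (gmat_mult G (Rmat G psi a g) M) (gmat_adj (Lmat G psi a g))) M"
  unfolding gmat_eq_def
proof (intro ballI)
  interpret group G by fact
  fix x y assume x: "x \<in> carrier G" and y: "y \<in> carrier G"
  define z where "z = inv g \<otimes> y"
  have z: "z \<in> carrier G" and gz: "g \<otimes> z = y"
    using \<open>g \<in> carrier G\<close> y by (simp_all add: z_def flip: m_assoc)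
  have M_eq: "\<And>u v. u \<in> carrier G \<Longrightarrow> v \<in> carrier G \<Longrightarrow> M u v = psi u v * phi (u \<otimes> v)"
    using twisted unfolding gmat_eq_def by blast
  have cocycle: "psi x g * psi (x \<otimes> g) z = psi x y * psi g z"
    using assms(4) x \<open>g \<in> carrier G\<close> z gz unfolding normalised_2cocycle_def by metis
  have "psi g z \<in> A"
    using assms(4) \<open>g \<in> carrier G\<close> z unfolding normalised_2cocycle_def by blast
  then have unimodular: "a * cnj a = 1" "psi g z * cnj (psi g z) = 1"
    using mult_cnj_eq_1_if_finite_subgroup_units[OF assms(3)] \<open>a \<in> A\<close> by blast+
  have "gmat_mult G (gmat_mult G (Rmat G psi a g) M) (gmat_adj (Lmat G psi a g)) x y
      = a * cnj a * (psi x g * psi (x \<otimes> g) z) * cnj (psi g z) * phi (x \<otimes> y)"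
    using gmat_conj_Rmat_Lmat[OF assms(1,2,6) x y] M_eq[of "x \<otimes> g" z] x \<open>g \<in> carrier G\<close> z gz
    by (simp add: z_def[symmetric] m_assoc ac_simps)
  also have "\<dots> = psi x y * phi (x \<otimes> y) * (psi g z * cnj (psi g z))"
    using unimodular(1) cocycle by (simp add: ac_simps)
  also have "\<dots> = M x y"
    using unimodular(2) M_eq x y by simp
  finally show "gmat_mult G (gmat_mult G (Rmat G psi a g) M) (gmat_adj (Lmat G psi a g)) x y = M x y" .
qed

theorem lemma4p3:
  fixes G :: "('g, 'm) monoid_scheme"
    and A :: "complex set"
    and psi :: "'g \<Rightarrow> 'g \<Rightarrow> complex"
    and M :: "'g \<Rightarrow> 'g \<Rightarrow> complex"
  assumes "group G" and "finite (carrier G)"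
    and "finite_subgroup_units A"
    and "normalised_2cocycle G A psi"
  shows "(\<forall>a\<in>A. \<forall>g\<in>carrier G.
            gmat_eq G (gmat_mult G (gmat_mult G (Rmat G psi a g) M) (gmat_adj (Lmat G psi a g))) M)
         \<longleftrightarrow> (\<exists>phi :: 'g \<Rightarrow> complex.
            gmat_eq G M (\<lambda>x y. psi x y * phi (x \<otimes>\<^bsub>G\<^esub> y)))"
proof
  assume "\<forall>a\<in>A. \<forall>g\<in>carrier G.
    gmat_eq G (gmat_mult G (gmat_mult G (Rmat G psi a g) M) (gmat_adj (Lmat G psi a g))) M"
  moreover have "1 \<in> A"
    using assms(3) by (simp add: finite_subgroup_units_def)
  ultimately have "gmat_eq G M (\<lambda>x y. psi x y * M (x \<otimes>\<^bsub>G\<^esub> y) \<one>\<^bsub>G\<^esub>)"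
    using assms(4) by (intro twisted_form_if_gmat_conj_invariant[OF assms(1,2)])
      (auto simp: normalised_2cocycle_def)
  then show "\<exists>phi. gmat_eq G M (\<lambda>x y. psi x y * phi (x \<otimes>\<^bsub>G\<^esub> y))"
    by (rule exI[of _ "\<lambda>w. M w \<one>\<^bsub>G\<^esub>"])
next
  assume "\<exists>phi. gmat_eq G M (\<lambda>x y. psi x y * phi (x \<otimes>\<^bsub>G\<^esub> y))"
  then show "\<forall>a\<in>A. \<forall>g\<in>carrier G.
    gmat_eq G (gmat_mult G (gmat_mult G (Rmat G psi a g) M) (gmat_adj (Lmat G psi a g))) M"
    using gmat_conj_invariant_if_twisted_form[OF assms] by blast
qed

end
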